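(* For all integers $0\le a\le b$, $$\sum_{s=0}^{a}(-1)^sq^{s^2-s}\binom{2b-2s}{2a-2s}_q\binom{b}{s}_{q^2}=q^{2a^2-a}\frac{(q^{2b-4a+2};q^2)_{2a}}{(q;q)_{2a}}.$$
   Context: $(x;t)_m=\prod_{j=0}^{m-1}(1-xt^j)$ is the $q$-Pochhammer symbol and $\binom{c}{d}_t=\prod_{j=0}^{d-1}\frac{1-t^{c-j}}{1-t^{j+1}}$ the $q$-binomial coefficient; identities are of rational functions in $q$. *)

theory Defs
  imports "HOL-Computational_Algebra.Polynomial" "HOL-Computational_Algebra.Fraction_Field"
begin

definition qpoch :: "'a::field \<Rightarrow> 'a \<Rightarrow> nat \<Rightarrow> 'a" where
  "qpoch x t m = (\<Prod>j<m. (1 - x * t ^ j))"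

text \<open>q-binomial coefficient, as the product of quotients (used with d \<le> c)\<close>
definition qbinom :: "nat \<Rightarrow> nat \<Rightarrow> 'a::field \<Rightarrow> 'a" where
  "qbinom c d t = (\<Prod>j<d. (1 - t ^ (c - j)) / (1 - t ^ (j + 1)))"

definition qX :: "rat poly fract" where
  "qX = Fract [:0, 1:] 1"

end

theory Submission
  imports Defs
begin

text \<open>
  Fix b and write S(a) and R(a) for the two sides. Both satisfy the first-order recurrence
  q^(4a+1) (1 - q^(2a+1)) (1 - q^(2a+2)) X(a+1) = (q^(4a+2) - q^(2b)) (q^(4a) - q^(2b)) X(a)
  and equal 1 at a = 0; since q is not a root of unity the leading coefficient never vanishes,
  so S = R. For R the recurrence is read off from the products. For S it is found by creative
  telescoping (Zeilberger's algorithm): applied to the summand F(a,s), the recurrence operator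
  equals G(a,s+1) - G(a,s) for an explicit certificate G(a,s) = F(a+1,s) r(s). This reduces, via
  the contiguous relations of F in a and in s, to a polynomial identity, and summing over s
  leaves only the boundary term G(a,a+1), which accounts for the extra summand s = a+1 of S(a+1).
\<close>

lemma qbinom_0 [simp]: "qbinom n 0 t = 1"
  by (simp add: qbinom_def)

lemma qbinom_eq_divide:
  "qbinom n k t = (\<Prod>j<k. 1 - t ^ (n - j)) / (\<Prod>j<k. 1 - t ^ Suc j)"
  by (simp add: qbinom_def prod_dividef)

lemma qbinom_Suc_mult:
  fixes t :: "'a::field"
  assumes "1 - t ^ Suc k \<noteq> 0"
  shows "qbinom n (Suc k) t * (1 - t ^ Suc k) = qbinom n k t * (1 - t ^ (n - k))"
  using assms by (simp add: qbinom_def)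

lemma qbinom_Suc_Suc_mult:
  fixes t :: "'a::field"
  assumes "1 - t ^ Suc k \<noteq> 0"
  shows "qbinom (Suc n) (Suc k) t * (1 - t ^ Suc k) = (1 - t ^ Suc n) * qbinom n k t"
proof -
  have "(\<Prod>j<Suc k. 1 - t ^ (Suc n - j)) = (1 - t ^ Suc n) * (\<Prod>j<k. 1 - t ^ (n - j))"
    by (subst prod.lessThan_Suc_shift) simp
  then show ?thesis
    using assms by (simp add: qbinom_eq_divide)
qed

lemma qbinom_Suc_Suc_lower_mult:
  fixes t :: "'a::field"
  assumes "1 - t ^ Suc k \<noteq> 0" "1 - t ^ Suc (Suc k) \<noteq> 0"
  shows "qbinom n (Suc (Suc k)) t * (1 - t ^ Suc k) * (1 - t ^ Suc (Suc k))
       = (1 - t ^ (n - k)) * (1 - t ^ (n - Suc k)) * qbinom n k t"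
proof -
  have "qbinom n (Suc (Suc k)) t * (1 - t ^ Suc k) * (1 - t ^ Suc (Suc k))
      = (qbinom n (Suc (Suc k)) t * (1 - t ^ Suc (Suc k))) * (1 - t ^ Suc k)"
    by (simp only: mult_ac)
  also have "\<dots> = (qbinom n (Suc k) t * (1 - t ^ Suc k)) * (1 - t ^ (n - Suc k))"
    by (simp only: qbinom_Suc_mult[OF assms(2)] mult_ac)
  also have "\<dots> = (qbinom n k t * (1 - t ^ (n - k))) * (1 - t ^ (n - Suc k))"
    by (simp only: qbinom_Suc_mult[OF assms(1)])
  finally show ?thesis
    by (simp only: mult_ac)
qed

lemma qbinom_Suc_Suc_both_mult:
  fixes t :: "'a::field"
  assumes "1 - t ^ Suc k \<noteq> 0" "1 - t ^ Suc (Suc k) \<noteq> 0"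
  shows "qbinom (Suc (Suc n)) (Suc (Suc k)) t * (1 - t ^ Suc k) * (1 - t ^ Suc (Suc k))
       = (1 - t ^ Suc n) * (1 - t ^ Suc (Suc n)) * qbinom n k t"
proof -
  have "qbinom (Suc (Suc n)) (Suc (Suc k)) t * (1 - t ^ Suc k) * (1 - t ^ Suc (Suc k))
      = (qbinom (Suc (Suc n)) (Suc (Suc k)) t * (1 - t ^ Suc (Suc k))) * (1 - t ^ Suc k)"
    by (simp only: mult_ac)
  also have "\<dots> = (1 - t ^ Suc (Suc n)) * qbinom (Suc n) (Suc k) t * (1 - t ^ Suc k)"
    by (simp only: qbinom_Suc_Suc_mult[OF assms(2)])
  also have "\<dots> = (1 - t ^ Suc (Suc n)) * ((1 - t ^ Suc n) * qbinom n k t)"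
    by (simp only: mult.assoc qbinom_Suc_Suc_mult[OF assms(1)])
  finally show ?thesis
    by (simp only: mult_ac)
qed

lemma power_int_add_nat:
  fixes x :: "'a::division_ring"
  assumes "x \<noteq> 0"
  shows "x powi (m + int n) = x powi m * x ^ n"
  using assms by (simp add: power_int_add)

lemma qpoch_0 [simp]: "qpoch x t 0 = 1"
  by (simp add: qpoch_def)

lemma qpoch_Suc: "qpoch x t (Suc m) = qpoch x t m * (1 - x * t ^ m)"
  by (simp add: qpoch_def)

lemma qpoch_Suc_shift: "qpoch x t (Suc m) = (1 - x) * qpoch (x * t) t m"
  unfolding qpoch_def by (subst prod.lessThan_Suc_shift) (simp add: mult_ac)

definition summand :: "'a::field \<Rightarrow> nat \<Rightarrow> nat \<Rightarrow> nat \<Rightarrow> 'a" where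
  "summand q b a s =
     (-1) ^ s * q ^ (s^2 - s) * qbinom (2*b - 2*s) (2*a - 2*s) q * qbinom b s (q ^ 2)"

text \<open>The certificate produced by Zeilberger's algorithm; the factor 1 - q^(2s) makes it vanish at s = 0.\<close>

definition certificate :: "'a::field \<Rightarrow> nat \<Rightarrow> nat \<Rightarrow> nat \<Rightarrow> 'a" where
  "certificate q b a s = summand q b (Suc a) s * (1 - q ^ (2*b + 1 - 2*s)) * (1 - q ^ (2*s))
     * (q ^ (4*a + 3 - 2*s) - q ^ (2*b + 1 - 2*s) + (1 + q) * q ^ (2*b - 2*a - 1) - q ^ (2*b + 1) - 1)"

definition closed_form :: "'a::field \<Rightarrow> nat \<Rightarrow> nat \<Rightarrow> 'a" where
  "closed_form q b a =
     q ^ (2*a^2 - a) * qpoch (q powi (2 * int b - 4 * int a + 2)) (q ^ 2) (2*a) / qpoch q q (2*a)"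

lemma certificate_0 [simp]: "certificate q b a 0 = 0"
  by (simp add: certificate_def)

lemma certificate_last:
  fixes q :: "'a::field"
  assumes "a < b"
  shows "certificate q b a (Suc a) = - ((1 - q ^ (2*a + 1)) * (1 - q ^ (2*a + 2))
           * (1 - q ^ (2*b - 2*a)) * (1 - q ^ (2*b - 2*a - 1)) * summand q b (Suc a) (Suc a))"
proof -
  define n where "n = b - a - 1"
  define x where "x = q ^ (2*a)"
  define z where "z = q ^ (2*n)"
  have b: "b = a + 1 + n"
    using assms by (simp add: n_def)
  have pows:
    "q ^ (2*b + 1 - 2 * Suc a) = q * z" "q ^ (2 * Suc a) = q^2 * x" "q ^ (4*a + 3 - 2 * Suc a) = q * x"
    "q ^ (2*b - 2*a - 1) = q * z" "q ^ (2*b + 1) = q^3 * x * z" "q ^ (2*a + 1) = q * x"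
    "q ^ (2*a + 2) = q^2 * x" "q ^ (2*b - 2*a) = q^2 * z"
    unfolding b x_def z_def
    by (simp_all add: power_add mult_ac flip: power_mult) (simp_all add: power2_eq_square power3_eq_cube)
  show ?thesis
    unfolding certificate_def pows by algebra
qed

context
  fixes q :: "'a::field"
  assumes not_root_of_unity: "\<And>n. n > 0 \<Longrightarrow> q ^ n \<noteq> 1"
begin

lemma one_minus_power_nonzero: "n > 0 \<Longrightarrow> 1 - q ^ n \<noteq> 0"
  using not_root_of_unity by simp

lemma one_minus_power_Suc_nonzero: "1 - q ^ Suc n \<noteq> 0"
  using one_minus_power_nonzero[of "Suc n"] by simp

lemma qpoch_nonzero: "qpoch q q m \<noteq> 0"
  unfolding qpoch_def using one_minus_power_Suc_nonzero by (simp add: prod_zero_iff)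

lemma summand_Suc_left:
  assumes "s \<le> a" "a < b"
  shows "summand q b (Suc a) s * (1 - q ^ (2*a - 2*s + 1)) * (1 - q ^ (2*a - 2*s + 2))
       = (1 - q ^ (2*b - 2*a)) * (1 - q ^ (2*b - 2*a - 1)) * summand q b a s"
proof -
  define k where "k = 2*a - 2*s"
  define c where "c = (-1) ^ s * q ^ (s^2 - s) * qbinom b s (q ^ 2)"
  have idx: "2 * Suc a - 2*s = Suc (Suc k)" "2*a - 2*s + 1 = Suc k" "2*a - 2*s + 2 = Suc (Suc k)"
    "2*b - 2*s - k = 2*b - 2*a" "2*b - 2*s - Suc k = 2*b - 2*a - 1"
    using assms by (simp_all add: k_def)
  have "summand q b (Suc a) s * (1 - q ^ (2*a - 2*s + 1)) * (1 - q ^ (2*a - 2*s + 2))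
      = c * (qbinom (2*b - 2*s) (Suc (Suc k)) q * (1 - q ^ Suc k) * (1 - q ^ Suc (Suc k)))"
    unfolding summand_def c_def idx by (simp only: mult_ac)
  also have "\<dots> = c * ((1 - q ^ (2*b - 2*a)) * (1 - q ^ (2*b - 2*a - 1)) * qbinom (2*b - 2*s) k q)"
    by (simp only: qbinom_Suc_Suc_lower_mult[OF one_minus_power_Suc_nonzero one_minus_power_Suc_nonzero] idx)
  also have "\<dots> = (1 - q ^ (2*b - 2*a)) * (1 - q ^ (2*b - 2*a - 1)) * summand q b a s"
    by (simp only: summand_def c_def k_def mult_ac)
  finally show ?thesis .
qed

lemma summand_Suc_right:
  assumes "s \<le> a" "a < b"
  shows "summand q b (Suc a) (Suc s) * (1 - q ^ (2*b + 1 - 2 * Suc s)) * (1 - q ^ (2 * Suc s))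
       = - (q ^ (2*s)) * (1 - q ^ (2*a - 2*s + 2)) * (1 - q ^ (2*a - 2*s + 1))
           * summand q b (Suc a) s"
proof -
  define n where "n = 2*b - 2 * Suc s"
  define k where "k = 2*a - 2*s"
  define c where "c = (-1) ^ s * q ^ (s^2 - s)"
  have idx: "2 * Suc a - 2 * Suc s = k" "2*b - 2*s = Suc (Suc n)" "2 * Suc a - 2*s = Suc (Suc k)"
    "2*b + 1 - 2 * Suc s = Suc n" "2*a - 2*s + 2 = Suc (Suc k)" "2*a - 2*s + 1 = Suc k"
    using assms by (simp_all add: n_def k_def)
  have sign: "(-1) ^ Suc s * q ^ ((Suc s)^2 - Suc s) = - (q ^ (2*s)) * c"
  proof -
    have "(Suc s)^2 - Suc s = (s^2 - s) + 2*s"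
      by (simp add: power2_eq_square)
    then show ?thesis
      by (simp add: c_def power_add)
  qed
  have "(q ^ 2) ^ (b - s) = q ^ Suc (Suc n)" "(q ^ 2) ^ Suc s = q ^ (2 * Suc s)"
    by (simp_all only: power_mult[symmetric] diff_mult_distrib2 idx(2))
  then have lower: "qbinom b (Suc s) (q ^ 2) * (1 - q ^ (2 * Suc s))
      = qbinom b s (q ^ 2) * (1 - q ^ Suc (Suc n))"
    using qbinom_Suc_mult[of "q ^ 2" s b] one_minus_power_Suc_nonzero[of "Suc (2 * s)"] by simp
  have "summand q b (Suc a) (Suc s) * (1 - q ^ (2*b + 1 - 2 * Suc s)) * (1 - q ^ (2 * Suc s))
      = - (q ^ (2*s)) * c * (qbinom n k q * (1 - q ^ Suc n))
          * (qbinom b (Suc s) (q ^ 2) * (1 - q ^ (2 * Suc s)))"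
    unfolding summand_def sign n_def[symmetric] idx by (simp only: mult_ac)
  also have "\<dots> = - (q ^ (2*s)) * c * qbinom b s (q ^ 2)
      * ((1 - q ^ Suc n) * (1 - q ^ Suc (Suc n)) * qbinom n k q)"
    unfolding lower by (simp only: mult_ac)
  also have "\<dots> = - (q ^ (2*s)) * c * qbinom b s (q ^ 2)
      * (qbinom (Suc (Suc n)) (Suc (Suc k)) q * (1 - q ^ Suc k) * (1 - q ^ Suc (Suc k)))"
    by (simp only: qbinom_Suc_Suc_both_mult[OF one_minus_power_Suc_nonzero one_minus_power_Suc_nonzero])
  also have "\<dots> = - (q ^ (2*s)) * (1 - q ^ (2*a - 2*s + 2)) * (1 - q ^ (2*a - 2*s + 1))
      * summand q b (Suc a) s"
    unfolding summand_def idx c_def by (simp only: mult_ac)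
  finally show ?thesis .
qed

lemma summand_creative_telescoping:
  assumes "s \<le> a" "a < b"
  shows "q ^ (4*a + 1) * (1 - q ^ (2*a + 1)) * (1 - q ^ (2*a + 2))
           * (1 - q ^ (2*b - 2*a)) * (1 - q ^ (2*b - 2*a - 1)) * summand q b (Suc a) s
       - (q ^ (4*a + 2) - q ^ (2*b)) * (q ^ (4*a) - q ^ (2*b))
           * (1 - q ^ (2*b - 2*a)) * (1 - q ^ (2*b - 2*a - 1)) * summand q b a s
       = q ^ (4*a + 1) * (certificate q b a (Suc s) - certificate q b a s)"
proof -
  define m where "m = a - s"
  define n where "n = b - a - 1"
  define x where "x = q ^ (2*s)"
  define y where "y = q ^ (2*m)"
  define z where "z = q ^ (2*n)"
  have ab: "a = s + m" "b = s + m + 1 + n"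
    using assms by (simp_all add: m_def n_def)
  \<comment> \<open>every power of q below becomes a monomial in q, x, y, z, free of truncated subtraction\<close>
  have pows:
    "q ^ (4*a + 1) = q * x^2 * y^2" "q ^ (2*a + 1) = q * x * y" "q ^ (2*a + 2) = q^2 * x * y"
    "q ^ (2*b - 2*a) = q^2 * z" "q ^ (2*b - 2*a - 1) = q * z" "q ^ (4*a + 2) = q^2 * x^2 * y^2"
    "q ^ (2*b) = q^2 * x * y * z" "q ^ (4*a) = x^2 * y^2"
    "q ^ (2*a - 2*s + 1) = q * y" "q ^ (2*a - 2*s + 2) = q^2 * y"
    "q ^ (2*b + 1 - 2 * Suc s) = q * y * z" "q ^ (2 * Suc s) = q^2 * x"
    "q ^ (2*b + 1 - 2*s) = q^3 * y * z" "q ^ (4*a + 3 - 2*s) = q^3 * x * y^2"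
    "q ^ (4*a + 3 - 2 * Suc s) = q * x * y^2" "q ^ (2*b + 1) = q^3 * x * y * z"
    unfolding ab x_def y_def z_def
    by (simp_all add: power_add mult_ac flip: power_mult) (simp_all add: power2_eq_square power3_eq_cube)
  have left: "summand q b (Suc a) s * (1 - q * y) * (1 - q^2 * y)
      = (1 - q^2 * z) * (1 - q * z) * summand q b a s"
    using summand_Suc_left[OF assms] unfolding pows .
  have right: "summand q b (Suc a) (Suc s) * (1 - q * y * z) * (1 - q^2 * x)
      = - x * (1 - q^2 * y) * (1 - q * y) * summand q b (Suc a) s"
    using summand_Suc_right[OF assms] unfolding pows x_def .
  show ?thesis
    unfolding certificate_def pows x_def[symmetric] using left right by algebra
qed

lemma sum_summand_recurrence:
  assumes "a < b"
  shows "q ^ (4*a + 1) * (1 - q ^ (2*a + 1)) * (1 - q ^ (2*a + 2))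
           * (\<Sum>s=0..Suc a. summand q b (Suc a) s)
       = (q ^ (4*a + 2) - q ^ (2*b)) * (q ^ (4*a) - q ^ (2*b)) * (\<Sum>s=0..a. summand q b a s)"
    (is "?A * ?D1 * ?D2 * ?S1 = ?E1 * ?E2 * ?S0")
proof -
  define N where "N = (1 - q ^ (2*b - 2*a)) * (1 - q ^ (2*b - 2*a - 1))"
  have "N \<noteq> 0"
    unfolding N_def using assms one_minus_power_nonzero by simp
  have "(\<Sum>s=0..a. ?A * ?D1 * ?D2 * N * summand q b (Suc a) s - ?E1 * ?E2 * N * summand q b a s)
      = (\<Sum>s=0..a. ?A * (certificate q b a (Suc s) - certificate q b a s))"
    using summand_creative_telescoping[OF _ assms] by (intro sum.cong) (simp_all add: N_def mult.assoc)
  also have "\<dots> = ?A * certificate q b a (Suc a)"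
    by (simp add: sum_distrib_left[symmetric] sum_Suc_diff)
  finally have "?A * ?D1 * ?D2 * N * (\<Sum>s=0..a. summand q b (Suc a) s) - ?E1 * ?E2 * N * ?S0
      = ?A * certificate q b a (Suc a)"
    by (simp only: sum_subtractf sum_distrib_left)
  moreover have "?S1 = (\<Sum>s=0..a. summand q b (Suc a) s) + summand q b (Suc a) (Suc a)"
    by simp
  ultimately have "N * (?A * ?D1 * ?D2 * ?S1 - ?E1 * ?E2 * ?S0)
      = ?A * certificate q b a (Suc a) + ?A * ?D1 * ?D2 * N * summand q b (Suc a) (Suc a)"
    by (simp add: algebra_simps)
  also have "\<dots> = 0"
    unfolding certificate_last[OF assms] N_def by (simp add: algebra_simps)
  finally show ?thesis
    using \<open>N \<noteq> 0\<close> by simp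
qed

lemma closed_form_recurrence:
  assumes "q \<noteq> 0"
  shows "q ^ (4*a + 1) * (1 - q ^ (2*a + 1)) * (1 - q ^ (2*a + 2)) * closed_form q b (Suc a)
       = (q ^ (4*a + 2) - q ^ (2*b)) * (q ^ (4*a) - q ^ (2*b)) * closed_form q b a"
proof -
  define x where "x = q powi (2 * int b - 4 * int (Suc a) + 2)"
  define P where "P = qpoch (q powi (2 * int b - 4 * int a + 2)) (q ^ 2) (2*a)"
  define Q where "Q = qpoch q q (2*a)"
  define D where "D = (1 - q ^ (2*a + 1)) * (1 - q ^ (2*a + 2))"
  have x4: "x * q ^ 2 * q ^ 2 = q powi (2 * int b - 4 * int a + 2)"
  proof -
    have "q powi (2 * int b - 4 * int a + 2) = q powi ((2 * int b - 4 * int (Suc a) + 2) + int 4)"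
      by (rule arg_cong[where f = "power_int q"]) simp
    also have "\<dots> = x * q ^ 4"
      unfolding x_def using assms by (rule power_int_add_nat)
    finally show ?thesis
      by (simp add: mult.assoc flip: power_add)
  qed
  have xb: "x * q ^ (4*a + 2) = q ^ (2*b)"
  proof -
    have "q ^ (2*b) = q powi ((2 * int b - 4 * int (Suc a) + 2) + int (4*a + 2))"
      by (simp only: power_int_of_nat[symmetric]) (rule arg_cong[where f = "power_int q"], simp)
    also have "\<dots> = x * q ^ (4*a + 2)"
      unfolding x_def using assms by (rule power_int_add_nat)
    finally show ?thesis ..
  qed
  have "qpoch x (q ^ 2) (2 * Suc a) = (1 - x) * (1 - x * q ^ 2) * P"
    unfolding P_def x4[symmetric] by (simp add: qpoch_Suc_shift)
  moreover have "qpoch q q (2 * Suc a) = Q * D"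
    by (simp add: Q_def D_def qpoch_Suc)
  moreover have "2 * (Suc a)^2 - Suc a = (2*a^2 - a) + (4*a + 1)"
    by (simp add: power2_eq_square algebra_simps)
  ultimately have Suc_a: "closed_form q b (Suc a)
      = q ^ (2*a^2 - a) * q ^ (4*a + 1) * ((1 - x) * (1 - x * q ^ 2) * P) / (Q * D)"
    unfolding closed_form_def x_def by (simp add: power_add)
  have "D \<noteq> 0"
    unfolding D_def using one_minus_power_nonzero[of "2*a + 1"] one_minus_power_nonzero[of "2*a + 2"]
    by simp
  have "q ^ (4*a + 1) * D * closed_form q b (Suc a)
      = (q ^ (4*a + 1) * q ^ (4*a + 1)) * ((1 - x) * (1 - x * q ^ 2)) * (q ^ (2*a^2 - a) * P / Q)"
    unfolding Suc_a using \<open>D \<noteq> 0\<close> qpoch_nonzero[of "2*a"] by (simp add: Q_def field_simps)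
  also have "\<dots> = (q ^ (4*a + 2) * (1 - x)) * (q ^ (4*a) * (1 - x * q ^ 2)) * closed_form q b a"
    unfolding closed_form_def P_def Q_def by (simp add: mult_ac flip: power_add)
  also have "\<dots> = (q ^ (4*a + 2) - q ^ (2*b)) * (q ^ (4*a) - q ^ (2*b)) * closed_form q b a"
    unfolding xb[symmetric] by (simp add: algebra_simps power_add power2_eq_square)
  finally show ?thesis
    unfolding D_def by (simp only: mult.assoc)
qed

theorem sum_summand_eq_closed_form:
  assumes "q \<noteq> 0" "a \<le> b"
  shows "(\<Sum>s=0..a. summand q b a s) = closed_form q b a"
  using assms(2)
proof (induction a)
  case 0
  show ?case
    by (simp add: summand_def closed_form_def)
next
  case (Suc a)
  then have "a < b"
    by simp
  let ?C = "q ^ (4*a + 1) * (1 - q ^ (2*a + 1)) * (1 - q ^ (2*a + 2))"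
  have "?C \<noteq> 0"
    using assms(1) one_minus_power_nonzero[of "2*a + 1"] one_minus_power_nonzero[of "2*a + 2"]
    by simp
  have "?C * (\<Sum>s=0..Suc a. summand q b (Suc a) s)
      = (q ^ (4*a + 2) - q ^ (2*b)) * (q ^ (4*a) - q ^ (2*b)) * closed_form q b a"
    using sum_summand_recurrence[OF \<open>a < b\<close>] Suc by simp
  also have "\<dots> = ?C * closed_form q b (Suc a)"
    using closed_form_recurrence[OF assms(1)] by simp
  finally show ?case
    using \<open>?C \<noteq> 0\<close> by simp
qed

end

lemma qX_power: "qX ^ n = Fract ([:0, 1:] ^ n) 1"
  unfolding qX_def by (induction n) (simp_all add: One_fract_def)

lemma qX_nonzero: "qX \<noteq> 0"
  unfolding qX_def Zero_fract_def by (simp add: eq_fract)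

lemma qX_not_root_of_unity:
  assumes "n > 0"
  shows "qX ^ n \<noteq> 1"
proof
  assume "qX ^ n = 1"
  then have "[:0, 1:] ^ n = (1 :: rat poly)"
    by (simp add: qX_power One_fract_def eq_fract)
  then have "degree ([:0, 1:] ^ n :: rat poly) = 0"
    by simp
  with assms show False
    by (simp add: degree_power_eq)
qed

theorem mainTheorem9:
  fixes a b :: nat
  assumes "a \<le> b"
  shows "(\<Sum>s=0..a. (-1) ^ s * qX ^ (s^2 - s) * qbinom (2*b - 2*s) (2*a - 2*s) qX
              * qbinom b s (qX ^ 2))
         = qX ^ (2*a^2 - a) * qpoch (qX powi (2 * int b - 4 * int a + 2)) (qX ^ 2) (2*a)
              / qpoch qX qX (2*a)"
  using sum_summand_eq_closed_form[OF qX_not_root_of_unity qX_nonzero assms]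
  unfolding summand_def closed_form_def .

end
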